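(* Let $A \in \mathbb{R}^{n \times r}$ and $B \in \mathbb{R}^{r \times n}$ be matrices of rank $n$. The following are equivalent: (i) $\sigma(\ker(A)) \cap \sigma(\mathrm{im}(B)) = \{0\}$; (ii) for all $J\subseteq [r]$ of cardinality $n$, the product $\det(A_{[n],J})\det(B_{J,[n]})$ either is zero or has the same sign as all other nonzero such products, and at least one such product is nonzero.
   Context: $[n]=\{1,\dots,n\}$; $A_{[n],J}$ is the submatrix of $A$ with columns in $J$, $B_{J,[n]}$ the submatrix of $B$ with rows in $J$. $\sigma$ is the componentwise sign vector in $\{-,0,+\}^r$, $\sigma(T)=\{\sigma(x)\mid x\in T\}$, and $0$ denotes the zero sign vector. *)

theory Defs
  imports "Jordan_Normal_Form.DL_Rank" "Jordan_Normal_Form.DL_Submatrix"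
    "Jordan_Normal_Form.Matrix_Kernel"
begin

definition sign_vec :: "real vec \<Rightarrow> real vec" where
  "sign_vec x = map_vec sgn x"

definition mat_image :: "real mat \<Rightarrow> real vec set" where
  "mat_image B = {B *\<^sub>v y | y. y \<in> carrier_vec (dim_col B)}"

(* product det(A_{[n],J}) * det(B_{J,[n]}) ; indices are 0-based *)
definition minor_prod :: "nat \<Rightarrow> real mat \<Rightarrow> real mat \<Rightarrow> nat set \<Rightarrow> real" where
  "minor_prod n A B J = det (submatrix A {0..<n} J) * det (submatrix B J {0..<n})"

end

theory Submission
  imports Defs
begin

(* Write D_d for the diagonal scaling of the columns of A by a vector d > 0.
   (1) Because B is injective (rank n), the sign vectors of ker A and im B meet only in 0
       iff A D_d B is nonsingular for every d > 0: a common nonzero sign vector of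
       x \<in> ker A and y \<in> im B is the same as x = D_d y for some d > 0.
   (2) By the Cauchy-Binet formula, det (A D_d B) = \<Sum>_J det A_{[n],J} det B_{J,[n]} \<Prod>_{j\<in>J} d_j,
       a multiaffine polynomial in d whose coefficients are the products of condition (ii).
   (3) Such a polynomial (all monomials of the same degree n) has no zero in the open
       positive orthant iff its nonzero coefficients all have one sign and one exists:
       letting the variables outside J tend to 0 isolates the coefficient of J, and the
       intermediate value theorem forbids a sign change. *)

(* pick J enumerates the elements of a finite set J in increasing order. *)

lemma pick_atLeastLessThan: "i < n \<Longrightarrow> pick {0..<n} i = i"
proof -
  assume i: "i < n"
  have "{a\<in>{0..<n}. a < i} = {0..<i}" using i by auto
  then show ?thesis using pick_card_in_set[of i "{0..<n}"] i by simp
qed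

lemma pick_image: assumes "finite J" shows "pick J ` {0..<card J} = J"
proof
  show "pick J ` {0..<card J} \<subseteq> J" using pick_in_set by auto
  show "J \<subseteq> pick J ` {0..<card J}"
  proof
    fix j assume j: "j \<in> J"
    have "{a\<in>J. a < j} \<subset> J" using j by auto
    then have "card {a\<in>J. a < j} \<in> {0..<card J}" using assms psubset_card_mono by auto
    then show "j \<in> pick J ` {0..<card J}" using pick_card_in_set[OF j] by force
  qed
qed

lemma pick_inj: "inj_on (pick J) {0..<card J}"
proof (rule inj_onI)
  fix x y assume "x \<in> {0..<card J}" "y \<in> {0..<card J}" "pick J x = pick J y"
  then show "x = y" using pick_mono[of x J y] pick_mono[of y J x]
    by (metis atLeastLessThan_iff less_irrefl linorder_neqE_nat)
qed

lemma submatrix_cols_carrier: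
  assumes "A \<in> carrier_mat m r" and "J \<subseteq> {0..<r}"
  shows "submatrix A {0..<m} J \<in> carrier_mat m (card J)"
proof -
  have "{i. i < m \<and> i \<in> {0..<m}} = {0..<m}" "{j. j < r \<and> j \<in> J} = J" using assms(2) by auto
  then show ?thesis using assms(1) unfolding carrier_mat_def by (simp add: dim_submatrix)
qed

lemma submatrix_cols_index:
  assumes "A \<in> carrier_mat m r" and "J \<subseteq> {0..<r}" and "i < m" and "j < card J"
  shows "submatrix A {0..<m} J $$ (i,j) = A $$ (i, pick J j)"
proof -
  have "{i. i < m \<and> i \<in> {0..<m}} = {0..<m}" "{j. j < r \<and> j \<in> J} = J" using assms(2) by auto
  then show ?thesis using assms by (subst submatrix_index) (auto simp: pick_atLeastLessThan)
qed

lemma submatrix_rows_carrier: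
  assumes "B \<in> carrier_mat r m" and "J \<subseteq> {0..<r}"
  shows "submatrix B J {0..<m} \<in> carrier_mat (card J) m"
proof -
  have "{i. i < m \<and> i \<in> {0..<m}} = {0..<m}" "{j. j < r \<and> j \<in> J} = J" using assms(2) by auto
  then show ?thesis using assms(1) unfolding carrier_mat_def by (simp add: dim_submatrix)
qed

lemma submatrix_rows_index:
  assumes "B \<in> carrier_mat r m" and "J \<subseteq> {0..<r}" and "i < card J" and "j < m"
  shows "submatrix B J {0..<m} $$ (i,j) = B $$ (pick J i, j)"
proof -
  have "{i. i < m \<and> i \<in> {0..<m}} = {0..<m}" "{j. j < r \<and> j \<in> J} = J" using assms(2) by auto
  then show ?thesis using assms by (subst submatrix_index) (auto simp: pick_atLeastLessThan)
qed

(* Expanding det (A * B) multilinearly in its rows gives a sum over all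
   row-index maps f : [n] \<rightarrow> [r]; only injective maps contribute, and these are exactly the
   maps pick J \<circ> p for an n-subset J of [r] and a permutation p of [n].  Grouping the terms
   by J produces the product of the two maximal minors. *)

abbreviation subsets_of_card :: "nat \<Rightarrow> nat \<Rightarrow> nat set set" where
  "subsets_of_card k r \<equiv> {J. J \<subseteq> {0..<r} \<and> card J = k}"

lemma finite_subsets_of_card: "finite (subsets_of_card k r)"
  by (rule finite_subset[of _ "Pow {0..<r}"]) auto

definition injective_index_maps :: "nat \<Rightarrow> nat \<Rightarrow> (nat \<Rightarrow> nat) set" where
  "injective_index_maps n r = {f. (\<forall>i\<in>{0..<n}. f i \<in> {0..<r}) \<and> (\<forall>i. i \<notin> {0..<n} \<longrightarrow> f i = i)
      \<and> inj_on f {0..<n}}"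

definition subset_perm_map :: "nat \<Rightarrow> nat set \<times> (nat \<Rightarrow> nat) \<Rightarrow> nat \<Rightarrow> nat" where
  "subset_perm_map n = (\<lambda>(J,p) i. if i < n then pick J (p i) else i)"

lemma det_mult_sum_injective_maps:
  fixes A B :: "'a :: comm_ring_1 mat"
  assumes A: "A \<in> carrier_mat n r" and B: "B \<in> carrier_mat r n"
  shows "det (A * B) = (\<Sum>f\<in>injective_index_maps n r.
           (\<Prod>i\<in>{0..<n}. A $$ (i, f i)) * det (mat\<^sub>r n n (\<lambda>i. row B (f i))))"
proof -
  let ?F = "{f. (\<forall>i\<in>{0..<n}. f i \<in> {0..<r}) \<and> (\<forall>i. i \<notin> {0..<n} \<longrightarrow> f i = i)}"
  let ?rows = "\<lambda>f. det (mat\<^sub>r n n (\<lambda>i. row B (f i)))"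
  have finF: "finite ?F" by (rule finite_bounded_functions) auto
  have scale_rows: "det (mat\<^sub>r n n (\<lambda>i. A $$ (i, f i) \<cdot>\<^sub>v row B (f i)))
      = (\<Prod>i\<in>{0..<n}. A $$ (i, f i)) * ?rows f" if "f \<in> ?F" for f
    by (rule det_rows_mul) (use that B in auto)
  have repeated_row: "?rows f = 0" if "f \<in> ?F - injective_index_maps n r" for f
  proof -
    from that obtain i j where ij: "f i = f j" "i \<noteq> j" "i < n" "j < n"
      unfolding injective_index_maps_def inj_on_def by auto
    show ?thesis by (rule det_identical_rows[OF _ ij(2-4)]) (use B ij in auto)
  qed
  have "det (A * B) = (\<Sum>f\<in>?F. det (mat\<^sub>r n n (\<lambda>i. A $$ (i, f i) \<cdot>\<^sub>v row B (f i))))"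
    unfolding mat_mul_finsum_alt[OF A B] by (rule det_linear_rows_sum) (use B in auto)
  also have "\<dots> = (\<Sum>f\<in>?F. (\<Prod>i\<in>{0..<n}. A $$ (i, f i)) * ?rows f)"
    using scale_rows by (rule sum.cong[OF refl])
  also have "\<dots> = (\<Sum>f\<in>injective_index_maps n r. (\<Prod>i\<in>{0..<n}. A $$ (i, f i)) * ?rows f)"
  proof (rule sum.mono_neutral_right[OF finF])
    show "injective_index_maps n r \<subseteq> ?F" unfolding injective_index_maps_def by blast
  qed (simp add: repeated_row)
  finally show ?thesis .
qed

lemma subset_perm_map_image:
  assumes "J \<subseteq> {0..<r}" "card J = n" "p permutes {0..<n}"
  shows "subset_perm_map n (J,p) ` {0..<n} = J"
proof -
  have "finite J" using assms(1) finite_subset by blast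
  have "subset_perm_map n (J,p) ` {0..<n} = pick J ` (p ` {0..<n})"
    unfolding subset_perm_map_def by force
  also have "\<dots> = J" using permutes_image[OF assms(3)] pick_image[OF \<open>finite J\<close>] assms(2) by simp
  finally show ?thesis .
qed

lemma subset_perm_map_injective:
  assumes J: "J \<subseteq> {0..<r}" "card J = n" and p: "p permutes {0..<n}"
  shows "subset_perm_map n (J,p) \<in> injective_index_maps n r"
proof -
  let ?f = "subset_perm_map n (J,p)"
  have p_range: "i < n \<Longrightarrow> p i < n" for i using permutes_in_image[OF p] by auto
  have "inj_on ?f {0..<n}"
  proof (rule inj_onI)
    fix i j assume "i \<in> {0..<n}" "j \<in> {0..<n}" "?f i = ?f j"
    then have "p i = p j" using pick_inj[of J] p_range J(2)
      unfolding subset_perm_map_def inj_on_def by auto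
    then show "i = j" using permutes_inj[OF p] unfolding inj_def by auto
  qed
  moreover have "\<forall>i\<in>{0..<n}. ?f i \<in> {0..<r}"
    using subset_perm_map_image[OF J p] J(1) by blast
  moreover have "\<forall>i. i \<notin> {0..<n} \<longrightarrow> ?f i = i" unfolding subset_perm_map_def by auto
  ultimately show ?thesis unfolding injective_index_maps_def by blast
qed

lemma inj_on_subset_perm_map:
  "inj_on (subset_perm_map n) (Sigma (subsets_of_card n r) (\<lambda>_. {p. p permutes {0..<n}}))"
proof (rule inj_onI)
  fix x y
  assume "x \<in> Sigma (subsets_of_card n r) (\<lambda>_. {p. p permutes {0..<n}})"
    and "y \<in> Sigma (subsets_of_card n r) (\<lambda>_. {p. p permutes {0..<n}})"
    and eq_xy: "subset_perm_map n x = subset_perm_map n y"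
  then obtain J p K q where xy: "x = (J,p)" "y = (K,q)"
    and J: "J \<subseteq> {0..<r}" "card J = n" and p: "p permutes {0..<n}"
    and K: "K \<subseteq> {0..<r}" "card K = n" and q: "q permutes {0..<n}" by auto
  have eq: "subset_perm_map n (J,p) = subset_perm_map n (K,q)" using eq_xy xy by simp
  have JK: "J = K" using subset_perm_map_image[OF J p] subset_perm_map_image[OF K q] eq by simp
  have "p i = q i" for i
  proof (cases "i < n")
    case True
    then have "pick J (p i) = pick J (q i)"
      using fun_cong[OF eq, of i] JK unfolding subset_perm_map_def by auto
    moreover have "p i \<in> {0..<card J}" "q i \<in> {0..<card J}"
      using permutes_in_image[OF p] permutes_in_image[OF q] True J by auto
    ultimately show ?thesis using pick_inj[of J] unfolding inj_on_def by blast
  next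
    case False
    then show ?thesis using permutes_not_in[OF p] permutes_not_in[OF q] by auto
  qed
  then show "x = y" using JK xy by auto
qed

(* Every injective map arises: J is its image and p records the order in which f visits J. *)
lemma subset_perm_map_onto:
  assumes f: "f \<in> injective_index_maps n r"
  obtains J p where "J \<subseteq> {0..<r}" "card J = n" "p permutes {0..<n}"
    and "f = subset_perm_map n (J,p)"
proof -
  define J where "J = f ` {0..<n}"
  have J: "J \<subseteq> {0..<r}" "card J = n"
    using f unfolding J_def injective_index_maps_def by (auto simp: card_image)
  have pick_J: "pick J ` {0..<n} = J" using pick_image[of J] J unfolding J_def by simp
  define p where "p = (\<lambda>i. if i < n then inv_into {0..<n} (pick J) (f i) else i)"
  have f_in: "i < n \<Longrightarrow> f i \<in> pick J ` {0..<n}" for i by (subst pick_J) (auto simp: J_def)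
  have p_range: "i < n \<Longrightarrow> p i \<in> {0..<n}" for i
    unfolding p_def using inv_into_into[OF f_in] by auto
  have pick_p: "i < n \<Longrightarrow> pick J (p i) = f i" for i
    unfolding p_def using f_inv_into_f[OF f_in] by auto
  have "p permutes {0..<n}"
  proof (rule inj_on_nat_permutes)
    show "inj_on p {0..<n}"
    proof (rule inj_onI)
      fix i j assume ij: "i \<in> {0..<n}" "j \<in> {0..<n}" "p i = p j"
      then have "f i = f j" using pick_p[of i] pick_p[of j] by simp
      then show "i = j" using f ij unfolding injective_index_maps_def inj_on_def by blast
    qed
  qed (use p_range p_def in auto)
  moreover have "f = subset_perm_map n (J,p)"
    using pick_p f unfolding subset_perm_map_def injective_index_maps_def by (auto intro!: ext)
  ultimately show thesis using J that by blast
qed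

lemma bij_betw_subset_perm_map:
  "bij_betw (subset_perm_map n) (Sigma (subsets_of_card n r) (\<lambda>_. {p. p permutes {0..<n}}))
     (injective_index_maps n r)"
  unfolding bij_betw_def
proof (intro conjI inj_on_subset_perm_map subset_antisym)
  show "subset_perm_map n ` Sigma (subsets_of_card n r) (\<lambda>_. {p. p permutes {0..<n}})
      \<subseteq> injective_index_maps n r"
    using subset_perm_map_injective by auto
  show "injective_index_maps n r
      \<subseteq> subset_perm_map n ` Sigma (subsets_of_card n r) (\<lambda>_. {p. p permutes {0..<n}})"
  proof
    fix f assume "f \<in> injective_index_maps n r"
    then obtain J p where "J \<subseteq> {0..<r}" "card J = n" "p permutes {0..<n}"
      and "f = subset_perm_map n (J,p)" by (rule subset_perm_map_onto)
    then show "f \<in> subset_perm_map n ` Sigma (subsets_of_card n r) (\<lambda>_. {p. p permutes {0..<n}})"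
      by auto
  qed
qed

(* For fixed J the terms indexed by the permutations of [n] sum to det A_{[n],J} det B_{J,[n]}:
   permuting the rows of B_{J,[n]} contributes signof p, and the products of entries of A
   assemble to the Leibniz expansion of det A_{[n],J}. *)
lemma sum_permutations_maximal_minors:
  fixes A B :: "'a :: comm_ring_1 mat"
  assumes A: "A \<in> carrier_mat n r" and B: "B \<in> carrier_mat r n"
    and J: "J \<subseteq> {0..<r}" "card J = n"
  shows "(\<Sum>p | p permutes {0..<n}. (\<Prod>i\<in>{0..<n}. A $$ (i, subset_perm_map n (J,p) i))
           * det (mat\<^sub>r n n (\<lambda>i. row B (subset_perm_map n (J,p) i))))
         = det (submatrix A {0..<n} J) * det (submatrix B J {0..<n})"
proof -
  let ?AJ = "submatrix A {0..<n} J"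
  let ?BJ = "submatrix B J {0..<n}"
  have AJ: "?AJ \<in> carrier_mat n n" using submatrix_cols_carrier[OF A J(1)] J(2) by simp
  have BJ: "?BJ \<in> carrier_mat n n" using submatrix_rows_carrier[OF B J(1)] J(2) by simp
  have leibniz_term: "(\<Prod>i\<in>{0..<n}. A $$ (i, subset_perm_map n (J,p) i))
           * det (mat\<^sub>r n n (\<lambda>i. row B (subset_perm_map n (J,p) i)))
         = signof p * (\<Prod>i = 0..<n. ?AJ $$ (i, p i)) * det ?BJ" if p: "p permutes {0..<n}" for p
  proof -
    have p_range: "i < n \<Longrightarrow> p i < n" for i using permutes_in_image[OF p] by auto
    have in_range: "i < n \<Longrightarrow> pick J (p i) < r" for i
      using pick_in_set[of "p i" J] p_range[of i] J by auto
    have "det (mat\<^sub>r n n (\<lambda>i. row B (subset_perm_map n (J,p) i)))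
        = det (mat n n (\<lambda>(i,j). ?BJ $$ (p i, j)))"
      by (rule arg_cong[of _ _ det], rule eq_matI)
        (use B J p_range in_range in \<open>auto simp: subset_perm_map_def submatrix_rows_index\<close>)
    also have "\<dots> = signof p * det ?BJ" by (rule det_permute_rows[OF BJ p])
    finally have rows: "det (mat\<^sub>r n n (\<lambda>i. row B (subset_perm_map n (J,p) i))) = signof p * det ?BJ" .
    have entries: "(\<Prod>i\<in>{0..<n}. A $$ (i, subset_perm_map n (J,p) i)) = (\<Prod>i = 0..<n. ?AJ $$ (i, p i))"
      by (rule prod.cong[OF refl]) (use A J p_range in \<open>auto simp: subset_perm_map_def submatrix_cols_index\<close>)
    show ?thesis unfolding rows entries by (simp add: ac_simps)
  qed
  have "(\<Sum>p | p permutes {0..<n}. (\<Prod>i\<in>{0..<n}. A $$ (i, subset_perm_map n (J,p) i))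
           * det (mat\<^sub>r n n (\<lambda>i. row B (subset_perm_map n (J,p) i))))
      = (\<Sum>p | p permutes {0..<n}. signof p * (\<Prod>i = 0..<n. ?AJ $$ (i, p i)) * det ?BJ)"
    using leibniz_term by (intro sum.cong) auto
  also have "\<dots> = det ?AJ * det ?BJ" unfolding det_def'[OF AJ] sum_distrib_right ..
  finally show ?thesis .
qed

theorem cauchy_binet:
  fixes A B :: "'a :: comm_ring_1 mat"
  assumes A: "A \<in> carrier_mat n r" and B: "B \<in> carrier_mat r n"
  shows "det (A * B) = (\<Sum>J\<in>subsets_of_card n r. det (submatrix A {0..<n} J) * det (submatrix B J {0..<n}))"
proof -
  define t where "t f = (\<Prod>i\<in>{0..<n}. A $$ (i, f i)) * det (mat\<^sub>r n n (\<lambda>i. row B (f i)))" for f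
  have "det (A * B) = (\<Sum>f\<in>injective_index_maps n r. t f)"
    unfolding t_def by (rule det_mult_sum_injective_maps[OF A B])
  also have "\<dots> = (\<Sum>(J,p)\<in>Sigma (subsets_of_card n r) (\<lambda>_. {p. p permutes {0..<n}}).
                     t (subset_perm_map n (J,p)))"
    using sum.reindex_bij_betw[OF bij_betw_subset_perm_map, of t] by (simp add: case_prod_unfold)
  also have "\<dots> = (\<Sum>J\<in>subsets_of_card n r. \<Sum>p | p permutes {0..<n}. t (subset_perm_map n (J,p)))"
    by (rule sum.Sigma[symmetric]) (auto simp: finite_subsets_of_card finite_permutations)
  also have "\<dots> = (\<Sum>J\<in>subsets_of_card n r. det (submatrix A {0..<n} J) * det (submatrix B J {0..<n}))"
    unfolding t_def by (rule sum.cong[OF refl]) (use sum_permutations_maximal_minors[OF A B] in auto)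
  finally show ?thesis .
qed

(* Each maximal
   minor of A then picks up the product of the weights of its columns, so by Cauchy-Binet
   det (A diag(d) B) is a polynomial in d with the products of maximal minors as coefficients. *)

definition scale_cols :: "'a :: times mat \<Rightarrow> (nat \<Rightarrow> 'a) \<Rightarrow> 'a mat" where
  "scale_cols A d = mat (dim_row A) (dim_col A) (\<lambda>(i,j). A $$ (i,j) * d j)"

lemma scale_cols_carrier: "A \<in> carrier_mat m r \<Longrightarrow> scale_cols A d \<in> carrier_mat m r"
  unfolding scale_cols_def carrier_mat_def by auto

lemma scale_cols_mult_vec:
  fixes A :: "'a :: comm_semiring_0 mat"
  assumes "A \<in> carrier_mat m r" and "v \<in> carrier_vec r"
  shows "scale_cols A d *\<^sub>v v = A *\<^sub>v vec r (\<lambda>j. d j * v $ j)"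
  by (rule eq_vecI) (use assms in \<open>auto simp: scale_cols_def scalar_prod_def ac_simps intro!: sum.cong\<close>)

lemma det_submatrix_scale_cols:
  fixes A :: "'a :: comm_ring_1 mat"
  assumes A: "A \<in> carrier_mat n r" and J: "J \<subseteq> {0..<r}" "card J = n"
  shows "det (submatrix (scale_cols A d) {0..<n} J) = det (submatrix A {0..<n} J) * (\<Prod>j\<in>J. d j)"
proof -
  let ?SJ = "submatrix (scale_cols A d) {0..<n} J"
  let ?AJ = "submatrix A {0..<n} J"
  have SJ: "?SJ \<in> carrier_mat n n"
    using submatrix_cols_carrier[OF scale_cols_carrier[OF A] J(1)] J(2) by simp
  have AJ: "?AJ \<in> carrier_mat n n" using submatrix_cols_carrier[OF A J(1)] J(2) by simp
  have "finite J" using J(1) finite_subset by blast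
  have weights: "(\<Prod>i\<in>{0..<n}. d (pick J i)) = (\<Prod>j\<in>J. d j)"
    using prod.reindex[OF pick_inj[of J], of d] pick_image[OF \<open>finite J\<close>] J(2) by (simp add: o_def)
  have "signof p * (\<Prod>i = 0..<n. ?SJ $$ (i, p i))
      = signof p * (\<Prod>i = 0..<n. ?AJ $$ (i, p i)) * (\<Prod>j\<in>J. d j)" if p: "p permutes {0..<n}" for p
  proof -
    have p_range: "i < n \<Longrightarrow> p i < n" for i using permutes_in_image[OF p] by auto
    have in_range: "i < n \<Longrightarrow> pick J (p i) < r" for i
      using pick_in_set[of "p i" J] p_range[of i] J by auto
    have "(\<Prod>i = 0..<n. ?SJ $$ (i, p i)) = (\<Prod>i = 0..<n. ?AJ $$ (i, p i) * d (pick J (p i)))"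
    proof (rule prod.cong[OF refl])
      fix i assume "i \<in> {0..<n}"
      then have i: "i < n" by simp
      have "?SJ $$ (i, p i) = scale_cols A d $$ (i, pick J (p i))"
        using submatrix_cols_index[OF scale_cols_carrier[OF A] J(1) i] p_range[OF i] J(2) by simp
      also have "\<dots> = ?AJ $$ (i, p i) * d (pick J (p i))"
        using submatrix_cols_index[OF A J(1) i] p_range[OF i] in_range[OF i] J(2) A i
        by (simp add: scale_cols_def)
      finally show "?SJ $$ (i, p i) = ?AJ $$ (i, p i) * d (pick J (p i))" .
    qed
    also have "\<dots> = (\<Prod>i = 0..<n. ?AJ $$ (i, p i)) * (\<Prod>i = 0..<n. d (pick J (p i)))"
      by (rule prod.distrib)
    also have "(\<Prod>i = 0..<n. d (pick J (p i))) = (\<Prod>i\<in>{0..<n}. d (pick J i))"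
      using prod.permute[OF p, of "\<lambda>i. d (pick J i)"] by (simp add: o_def)
    finally show ?thesis unfolding weights by simp
  qed
  then show ?thesis unfolding det_def'[OF SJ] det_def'[OF AJ] sum_distrib_right
    by (intro sum.cong) auto
qed

lemma det_scale_cols_mult:
  fixes A B :: "'a :: comm_ring_1 mat"
  assumes A: "A \<in> carrier_mat n r" and B: "B \<in> carrier_mat r n"
  shows "det (scale_cols A d * B) = (\<Sum>J\<in>subsets_of_card n r.
           det (submatrix A {0..<n} J) * det (submatrix B J {0..<n}) * (\<Prod>j\<in>J. d j))"
  unfolding cauchy_binet[OF scale_cols_carrier[OF A] B]
  by (rule sum.cong[OF refl]) (auto simp: det_submatrix_scale_cols[OF A] ac_simps)

definition subset_poly :: "(nat set \<Rightarrow> real) \<Rightarrow> nat set set \<Rightarrow> (nat \<Rightarrow> real) \<Rightarrow> real" where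
  "subset_poly c JJ d = (\<Sum>J\<in>JJ. c J * (\<Prod>j\<in>J. d j))"

(* If the nonzero coefficients share one sign s, every monomial has sign s or vanishes on the
   positive orthant, and the monomial of a nonzero coefficient is strictly signed. *)
lemma subset_poly_nonzero_if_sign_consistent:
  assumes fin: "finite JJ"
    and same_sign: "\<forall>J\<in>JJ. \<forall>K\<in>JJ. c J \<noteq> 0 \<and> c K \<noteq> 0 \<longrightarrow> sgn (c J) = sgn (c K)"
    and J1: "J1 \<in> JJ" "c J1 \<noteq> 0" and d: "\<forall>j. 0 < d j"
  shows "subset_poly c JJ d \<noteq> 0"
proof -
  let ?s = "sgn (c J1)"
  have monomial_pos: "0 < (\<Prod>j\<in>J. d j)" for J using d by (simp add: prod_pos)
  have signed_term: "?s * (c J * (\<Prod>j\<in>J. d j)) = \<bar>c J\<bar> * (\<Prod>j\<in>J. d j)" if "J \<in> JJ" for J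
  proof (cases "c J = 0")
    case False
    then have "?s = sgn (c J)" using same_sign that J1 by metis
    then show ?thesis by (simp add: abs_sgn mult.assoc[symmetric])
  qed simp
  have "0 < \<bar>c J1\<bar> * (\<Prod>j\<in>J1. d j)" using J1(2) monomial_pos by simp
  also have "\<dots> \<le> (\<Sum>J\<in>JJ. \<bar>c J\<bar> * (\<Prod>j\<in>J. d j))"
  proof (rule member_le_sum[OF J1(1) _ fin])
    show "0 \<le> \<bar>c J\<bar> * (\<Prod>j\<in>J. d j)" for J
      by (intro mult_nonneg_nonneg abs_ge_zero less_imp_le[OF monomial_pos])
  qed
  also have "\<dots> = (\<Sum>J\<in>JJ. ?s * (c J * (\<Prod>j\<in>J. d j)))"
    by (rule sum.cong[OF refl]) (simp add: signed_term)
  also have "\<dots> = ?s * subset_poly c JJ d" by (simp add: subset_poly_def sum_distrib_left)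
  finally show ?thesis by auto
qed

(* Evaluating at d_j = 1 on J0 and d_j = t elsewhere, every monomial J \<noteq> J0 of the same
   degree contains a variable outside J0 and is therefore at most t in absolute value. *)
lemma prod_off_set_weight_le:
  fixes t :: real
  assumes t: "0 \<le> t" "t \<le> 1" and fin: "finite J" "finite J0"
    and card: "card J = card J0" and ne: "J \<noteq> J0"
  shows "\<bar>\<Prod>j\<in>J. (if j \<in> J0 then 1 else t)\<bar> \<le> t"
proof -
  let ?w = "\<lambda>j. if j \<in> J0 then 1 else t"
  have "\<not> J \<subseteq> J0" using card_subset_eq[OF fin(2) _ card] ne by auto
  then obtain j where j: "j \<in> J" "j \<notin> J0" by auto
  have split: "(\<Prod>j\<in>J. ?w j) = t * (\<Prod>j\<in>J - {j}. ?w j)"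
    using prod.remove[OF fin(1) j(1), of ?w] j(2) by simp
  have "0 \<le> (\<Prod>j\<in>J - {j}. ?w j)" "(\<Prod>j\<in>J - {j}. ?w j) \<le> 1"
    by (rule prod_nonneg, use t in auto) (rule prod_le_1, use t in auto)
  then show ?thesis unfolding split using t by (simp add: abs_mult mult_left_le)
qed

lemma subset_poly_near_coefficient:
  fixes t :: real
  assumes fin: "finite JJ" and same_card: "\<And>J. J \<in> JJ \<Longrightarrow> finite J \<and> card J = n"
    and J0: "J0 \<in> JJ" and t: "0 \<le> t" "t \<le> 1"
  shows "\<bar>subset_poly c JJ (\<lambda>j. if j \<in> J0 then 1 else t) - c J0\<bar> \<le> t * (\<Sum>J\<in>JJ. \<bar>c J\<bar>)"
proof -
  let ?term = "\<lambda>J. c J * (\<Prod>j\<in>J. (if j \<in> J0 then 1 else t))"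
  have "subset_poly c JJ (\<lambda>j. if j \<in> J0 then 1 else t) - c J0 = (\<Sum>J\<in>JJ - {J0}. ?term J)"
    unfolding subset_poly_def using sum.remove[OF fin J0, of ?term] by simp
  then have "\<bar>subset_poly c JJ (\<lambda>j. if j \<in> J0 then 1 else t) - c J0\<bar> \<le> (\<Sum>J\<in>JJ - {J0}. \<bar>?term J\<bar>)"
    by (simp add: sum_abs)
  also have "\<dots> \<le> (\<Sum>J\<in>JJ - {J0}. \<bar>c J\<bar> * t)"
  proof (rule sum_mono)
    fix J assume J: "J \<in> JJ - {J0}"
    have "\<bar>\<Prod>j\<in>J. (if j \<in> J0 then 1 else t)\<bar> \<le> t"
      by (rule prod_off_set_weight_le[OF t]) (use J same_card J0 in auto)
    then show "\<bar>?term J\<bar> \<le> \<bar>c J\<bar> * t" by (simp add: abs_mult mult_left_mono)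
  qed
  also have "\<dots> \<le> (\<Sum>J\<in>JJ. \<bar>c J\<bar> * t)" by (rule sum_mono2[OF fin]) (use t in auto)
  also have "\<dots> = t * (\<Sum>J\<in>JJ. \<bar>c J\<bar>)" by (simp add: sum_distrib_left mult.commute)
  finally show ?thesis .
qed

lemma sgn_eq_if_no_zero:
  fixes f :: "real \<Rightarrow> real"
  assumes "a \<le> b" and "continuous_on {a..b} f" and "\<forall>x\<in>{a..b}. f x \<noteq> 0"
  shows "sgn (f a) = sgn (f b)"
proof (rule ccontr)
  assume "sgn (f a) \<noteq> sgn (f b)"
  moreover have "f a \<noteq> 0" "f b \<noteq> 0" using assms by auto
  ultimately have "f a < 0 \<and> 0 < f b \<or> f b < 0 \<and> 0 < f a" by (auto simp: sgn_if split: if_splits)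
  then obtain x where "a \<le> x" "x \<le> b" "f x = 0"
    using IVT'[of f a 0 b] IVT2'[of f b 0 a] assms(1,2) by force
  then show False using assms(3) by auto
qed

(* Conversely, if the polynomial has no zero in the open positive orthant, every nonzero
   coefficient has the sign of its value at d = 1: along the segment from
   (1 on J0, t elsewhere) with t small, where the J0-term dominates, to d = 1, the
   polynomial cannot change sign. *)
lemma sgn_coefficient_if_nonvanishing:
  assumes fin: "finite JJ" and same_card: "\<And>J. J \<in> JJ \<Longrightarrow> finite J \<and> card J = n"
    and nonzero: "\<forall>d. (\<forall>j. 0 < d j) \<longrightarrow> subset_poly c JJ d \<noteq> 0"
    and J0: "J0 \<in> JJ" "c J0 \<noteq> 0"
  shows "sgn (c J0) = sgn (subset_poly c JJ (\<lambda>_. 1))"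
proof -
  define \<phi> where "\<phi> t = subset_poly c JJ (\<lambda>j. if j \<in> J0 then 1 else t)" for t
  define M where "M = (\<Sum>J\<in>JJ. \<bar>c J\<bar>)"
  have "0 \<le> M" unfolding M_def by (rule sum_nonneg) auto
  define t0 where "t0 = min 1 (\<bar>c J0\<bar> / (2 * (M + 1)))"
  have t0: "0 < t0" "t0 \<le> 1" unfolding t0_def using J0 \<open>0 \<le> M\<close> by auto
  have "t0 * M \<le> (\<bar>c J0\<bar> / (2 * (M + 1))) * M"
    unfolding t0_def by (rule mult_right_mono) (use \<open>0 \<le> M\<close> in auto)
  also have "\<dots> < \<bar>c J0\<bar>" using J0 \<open>0 \<le> M\<close> by (simp add: field_simps add_nonneg_pos)
  finally have "\<bar>\<phi> t0 - c J0\<bar> < \<bar>c J0\<bar>"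
    using subset_poly_near_coefficient[OF fin same_card J0(1), of t0 c] t0
    unfolding \<phi>_def M_def by linarith
  then have sgn_t0: "sgn (\<phi> t0) = sgn (c J0)" by (auto simp: sgn_if abs_if split: if_splits)
  have "continuous_on {t0..1} \<phi>"
  proof -
    have "continuous_on {t0..1} (\<lambda>t::real. if j \<in> J0 then 1 else t)" for j
      by (cases "j \<in> J0") (auto intro: continuous_intros)
    then show ?thesis unfolding \<phi>_def subset_poly_def by (intro continuous_intros)
  qed
  moreover have "\<forall>t\<in>{t0..1}. \<phi> t \<noteq> 0" unfolding \<phi>_def using nonzero t0 by auto
  ultimately have "sgn (\<phi> t0) = sgn (\<phi> 1)" using sgn_eq_if_no_zero t0(2) by blast
  moreover have "\<phi> 1 = subset_poly c JJ (\<lambda>_. 1)" unfolding \<phi>_def by simp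
  ultimately show ?thesis using sgn_t0 by simp
qed

theorem subset_poly_positive_orthant_iff:
  assumes fin: "finite JJ" and same_card: "\<And>J. J \<in> JJ \<Longrightarrow> finite J \<and> card J = n"
  shows "(\<forall>d. (\<forall>j. 0 < d j) \<longrightarrow> subset_poly c JJ d \<noteq> 0) \<longleftrightarrow>
    ((\<forall>J\<in>JJ. \<forall>K\<in>JJ. c J \<noteq> 0 \<and> c K \<noteq> 0 \<longrightarrow> sgn (c J) = sgn (c K)) \<and> (\<exists>J\<in>JJ. c J \<noteq> 0))"
proof
  assume nonzero: "\<forall>d. (\<forall>j. 0 < d j) \<longrightarrow> subset_poly c JJ d \<noteq> 0"
  have "\<exists>J\<in>JJ. c J \<noteq> 0"
  proof (rule ccontr)
    assume "\<not> (\<exists>J\<in>JJ. c J \<noteq> 0)"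
    then have "subset_poly c JJ (\<lambda>_. 1) = 0" unfolding subset_poly_def by simp
    then show False using nonzero by simp
  qed
  moreover have "sgn (c J) = sgn (c K)" if "J \<in> JJ" "K \<in> JJ" "c J \<noteq> 0" "c K \<noteq> 0" for J K
    using sgn_coefficient_if_nonvanishing[OF fin same_card nonzero that(1,3)]
      sgn_coefficient_if_nonvanishing[OF fin same_card nonzero that(2,4)] by simp
  ultimately show "(\<forall>J\<in>JJ. \<forall>K\<in>JJ. c J \<noteq> 0 \<and> c K \<noteq> 0 \<longrightarrow> sgn (c J) = sgn (c K)) \<and> (\<exists>J\<in>JJ. c J \<noteq> 0)"
    by blast
next
  assume "(\<forall>J\<in>JJ. \<forall>K\<in>JJ. c J \<noteq> 0 \<and> c K \<noteq> 0 \<longrightarrow> sgn (c J) = sgn (c K)) \<and> (\<exists>J\<in>JJ. c J \<noteq> 0)"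
  then obtain J1 where "J1 \<in> JJ" "c J1 \<noteq> 0"
    and "\<forall>J\<in>JJ. \<forall>K\<in>JJ. c J \<noteq> 0 \<and> c K \<noteq> 0 \<longrightarrow> sgn (c J) = sgn (c K)" by blast
  then show "\<forall>d. (\<forall>j. 0 < d j) \<longrightarrow> subset_poly c JJ d \<noteq> 0"
    using subset_poly_nonzero_if_sign_consistent[OF fin] by blast
qed

lemma sign_vec_dim [simp]: "dim_vec (sign_vec x) = dim_vec x"
  unfolding sign_vec_def by simp

lemma sign_vec_index [simp]: "i < dim_vec x \<Longrightarrow> sign_vec x $ i = sgn (x $ i)"
  unfolding sign_vec_def by simp

lemma sign_vec_zero_iff: "sign_vec x = 0\<^sub>v r \<longleftrightarrow> x = 0\<^sub>v r"
proof
  assume zero: "sign_vec x = 0\<^sub>v r"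
  then have "dim_vec x = r" by (metis index_zero_vec(2) sign_vec_dim)
  moreover have "x $ i = 0" if "i < r" for i
    using arg_cong[OF zero, of "\<lambda>v. v $ i"] that \<open>dim_vec x = r\<close> by (simp add: sgn_0_0)
  ultimately show "x = 0\<^sub>v r" by (intro eq_vecI) auto
qed (auto intro: eq_vecI)

lemma sign_vec_eq_iff_positive_scaling:
  assumes x: "x \<in> carrier_vec r" and y: "y \<in> carrier_vec r"
  shows "sign_vec x = sign_vec y \<longleftrightarrow> (\<exists>d. (\<forall>j. 0 < d j) \<and> x = vec r (\<lambda>j. d j * y $ j))"
proof
  assume "sign_vec x = sign_vec y"
  then have same_sgn: "sgn (x $ j) = sgn (y $ j)" if "j < r" for j
  proof -
    have "sign_vec x $ j = sign_vec y $ j" using \<open>sign_vec x = sign_vec y\<close> by simp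
    then show ?thesis using that x y by simp
  qed
  define d where "d j = (if j < r \<and> y $ j \<noteq> 0 then x $ j / y $ j else 1)" for j
  have "0 < d j" for j
  proof (cases "j < r \<and> y $ j \<noteq> 0")
    case True
    then have "sgn (x $ j) = sgn (y $ j)" using same_sgn by auto
    then show ?thesis using True by (auto simp: d_def sgn_if zero_less_divide_iff split: if_splits)
  qed (auto simp: d_def)
  moreover have "x = vec r (\<lambda>j. d j * y $ j)"
  proof (rule eq_vecI)
    fix j assume "j < dim_vec (vec r (\<lambda>j. d j * y $ j))"
    then have j: "j < r" by simp
    show "x $ j = vec r (\<lambda>j. d j * y $ j) $ j"
    proof (cases "y $ j = 0")
      case True
      then have "x $ j = 0" using same_sgn[OF j] by (simp add: sgn_0_0)
      then show ?thesis using True j by simp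
    qed (use j in \<open>auto simp: d_def\<close>)
  qed (use x in auto)
  ultimately show "\<exists>d. (\<forall>j. 0 < d j) \<and> x = vec r (\<lambda>j. d j * y $ j)" by blast
next
  assume "\<exists>d. (\<forall>j. 0 < d j) \<and> x = vec r (\<lambda>j. d j * y $ j)"
  then obtain d where "\<forall>j. 0 < d j" and "x = vec r (\<lambda>j. d j * y $ j)" by blast
  then show "sign_vec x = sign_vec y" using y by (intro eq_vecI) (auto simp: sgn_mult)
qed

lemma sign_vec_kernel_image_trivial_iff:
  assumes A: "A \<in> carrier_mat n r" and B: "B \<in> carrier_mat r n"
  shows "sign_vec ` mat_kernel A \<inter> sign_vec ` mat_image B = {0\<^sub>v r} \<longleftrightarrow>
    (\<forall>d. (\<forall>j. 0 < d j) \<longrightarrow>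
       (\<forall>y\<in>mat_image B. vec r (\<lambda>j. d j * y $ j) \<in> mat_kernel A \<longrightarrow> y = 0\<^sub>v r))"
    (is "?trivial \<longleftrightarrow> ?no_rescaling")
proof -
  have image_carrier: "y \<in> carrier_vec r" if "y \<in> mat_image B" for y
    using that B unfolding mat_image_def by auto
  show ?thesis
  proof
    assume trivial: ?trivial
    show ?no_rescaling
    proof (intro allI impI ballI)
      fix d y assume d: "\<forall>j. 0 < d j" and y: "y \<in> mat_image B"
        and kernel: "vec r (\<lambda>j. d j * y $ j) \<in> mat_kernel A"
      have "vec r (\<lambda>j. d j * y $ j) \<in> carrier_vec r" by simp
      then have "sign_vec (vec r (\<lambda>j. d j * y $ j)) = sign_vec y"
        using sign_vec_eq_iff_positive_scaling[OF _ image_carrier[OF y]] d by blast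
      then have "sign_vec y \<in> sign_vec ` mat_kernel A"
        using rev_image_eqI[OF kernel] by metis
      then have "sign_vec y \<in> sign_vec ` mat_kernel A \<inter> sign_vec ` mat_image B"
        using y by blast
      then show "y = 0\<^sub>v r" using trivial sign_vec_zero_iff by auto
    qed
  next
    assume no_rescaling: ?no_rescaling
    have "s = 0\<^sub>v r" if "s \<in> sign_vec ` mat_kernel A \<inter> sign_vec ` mat_image B" for s
    proof -
      from that obtain x y where x: "x \<in> mat_kernel A" and y: "y \<in> mat_image B"
        and s: "s = sign_vec x" "s = sign_vec y" by auto
      then obtain d where "\<forall>j. 0 < d j" "x = vec r (\<lambda>j. d j * y $ j)"
        using sign_vec_eq_iff_positive_scaling[OF mat_kernelD(1)[OF A x] image_carrier[OF y]] by auto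
      then have "y = 0\<^sub>v r" using no_rescaling x y by auto
      then show ?thesis using s(2) sign_vec_zero_iff by auto
    qed
    moreover have "0\<^sub>v r \<in> sign_vec ` mat_kernel A \<inter> sign_vec ` mat_image B"
    proof -
      have zero: "sign_vec (0\<^sub>v r) = 0\<^sub>v r" using sign_vec_zero_iff by blast
      have "0\<^sub>v r \<in> mat_kernel A" by (rule mat_kernelI[OF A]) (use A in auto)
      moreover have "0\<^sub>v r \<in> mat_image B"
        unfolding mat_image_def using B by (auto intro!: exI[of _ "0\<^sub>v n"])
      ultimately show ?thesis using rev_image_eqI[of "0\<^sub>v r" _ "0\<^sub>v r" sign_vec] zero by auto
    qed
    ultimately show ?trivial by blast
  qed
qed

lemma det_scale_cols_mult_zero_iff:
  fixes A B :: "real mat"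
  assumes A: "A \<in> carrier_mat n r" and B: "B \<in> carrier_mat r n"
    and inj: "\<forall>z\<in>carrier_vec n. B *\<^sub>v z = 0\<^sub>v r \<longrightarrow> z = 0\<^sub>v n"
  shows "det (scale_cols A d * B) = 0 \<longleftrightarrow>
    (\<exists>y\<in>mat_image B. y \<noteq> 0\<^sub>v r \<and> vec r (\<lambda>j. d j * y $ j) \<in> mat_kernel A)"
proof -
  have M: "scale_cols A d * B \<in> carrier_mat n n"
    using mult_carrier_mat[OF scale_cols_carrier[OF A] B] .
  have pointwise: "(z \<noteq> 0\<^sub>v n \<and> (scale_cols A d * B) *\<^sub>v z = 0\<^sub>v n) \<longleftrightarrow>
      (B *\<^sub>v z \<noteq> 0\<^sub>v r \<and> vec r (\<lambda>j. d j * (B *\<^sub>v z) $ j) \<in> mat_kernel A)"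
    if z: "z \<in> carrier_vec n" for z
  proof -
    have "z \<noteq> 0\<^sub>v n \<longleftrightarrow> B *\<^sub>v z \<noteq> 0\<^sub>v r" using inj z B by auto
    moreover have "(scale_cols A d * B) *\<^sub>v z = A *\<^sub>v vec r (\<lambda>j. d j * (B *\<^sub>v z) $ j)"
      using assoc_mult_mat_vec[OF scale_cols_carrier[OF A] B z] scale_cols_mult_vec[OF A] B z
      by simp
    ultimately show ?thesis unfolding mat_kernel_def using A by auto
  qed
  have "det (scale_cols A d * B) = 0 \<longleftrightarrow>
      (\<exists>z\<in>carrier_vec n. B *\<^sub>v z \<noteq> 0\<^sub>v r \<and> vec r (\<lambda>j. d j * (B *\<^sub>v z) $ j) \<in> mat_kernel A)"
    unfolding det_0_iff_vec_prod_zero[OF M] using pointwise by blast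
  also have "\<dots> \<longleftrightarrow> (\<exists>y\<in>mat_image B. y \<noteq> 0\<^sub>v r \<and> vec r (\<lambda>j. d j * y $ j) \<in> mat_kernel A)"
    using carrier_matD(2)[OF B] unfolding mat_image_def by blast
  finally show ?thesis .
qed

lemma (in vec_space) full_rank_injective:
  assumes B: "B \<in> carrier_mat n nc" and rank: "rank B = nc"
    and z: "z \<in> carrier_vec nc" and Bz: "B *\<^sub>v z = 0\<^sub>v n"
  shows "z = 0\<^sub>v nc"
proof (rule ccontr)
  assume nonzero: "z \<noteq> 0\<^sub>v nc"
  show False
  proof (cases "distinct (cols B)")
    case True
    then show False using full_rank_lin_indpt[OF B rank] lin_depI[OF B z nonzero Bz] by blast
  next
    case False
    (* repeated columns: a maximal independent subset of the columns has fewer than nc elements *)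
    obtain S where S: "maximal S (\<lambda>T. T \<subseteq> set (cols B) \<and> lin_indpt T)"
      using maximal_exists[of "\<lambda>T. T \<subseteq> set (cols B) \<and> lin_indpt T" "card (set (cols B))" "{}"]
      by (meson List.finite_set card_mono empty_iff empty_subsetI finite_lin_indpt2 rev_finite_subset)
    then have "card S \<le> card (set (cols B))" by (simp add: card_mono maximal_def)
    also have "\<dots> < nc"
      using B False card_distinct cols_length card_length carrier_matD(2) nat_less_le by metis
    finally show False using rank_card_indpt[OF B S] rank by simp
  qed
qed

theorem mainTheorem15:
  fixes A B :: "real mat" and n r :: nat
  assumes "A \<in> carrier_mat n r" and "B \<in> carrier_mat r n"
    and "vec_space.rank n A = n" and "vec_space.rank r B = n"
  shows "(sign_vec ` mat_kernel A \<inter> sign_vec ` mat_image B = {0\<^sub>v r}) \<longleftrightarrow>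
    ((\<forall>J K. J \<subseteq> {0..<r} \<and> card J = n \<and> K \<subseteq> {0..<r} \<and> card K = n \<and>
        minor_prod n A B J \<noteq> 0 \<and> minor_prod n A B K \<noteq> 0 \<longrightarrow>
        sgn (minor_prod n A B J) = sgn (minor_prod n A B K)) \<and>
     (\<exists>J. J \<subseteq> {0..<r} \<and> card J = n \<and> minor_prod n A B J \<noteq> 0))"
proof -
  note A = assms(1) and B = assms(2)
  have inj: "\<forall>z\<in>carrier_vec n. B *\<^sub>v z = 0\<^sub>v r \<longrightarrow> z = 0\<^sub>v n"
    using vec_space.full_rank_injective[OF B assms(4)] by blast
  have "(sign_vec ` mat_kernel A \<inter> sign_vec ` mat_image B = {0\<^sub>v r}) \<longleftrightarrow>
      (\<forall>d. (\<forall>j. 0 < d j) \<longrightarrow> det (scale_cols A d * B) \<noteq> 0)"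
    unfolding sign_vec_kernel_image_trivial_iff[OF A B] det_scale_cols_mult_zero_iff[OF A B inj]
    by blast
  also have "\<dots> \<longleftrightarrow> (\<forall>d. (\<forall>j. 0 < d j) \<longrightarrow> subset_poly (minor_prod n A B) (subsets_of_card n r) d \<noteq> 0)"
    by (simp add: det_scale_cols_mult[OF A B] subset_poly_def minor_prod_def)
  also have "\<dots> \<longleftrightarrow>
      ((\<forall>J\<in>subsets_of_card n r. \<forall>K\<in>subsets_of_card n r. minor_prod n A B J \<noteq> 0 \<and> minor_prod n A B K \<noteq> 0
          \<longrightarrow> sgn (minor_prod n A B J) = sgn (minor_prod n A B K)) \<and>
       (\<exists>J\<in>subsets_of_card n r. minor_prod n A B J \<noteq> 0))"
    by (rule subset_poly_positive_orthant_iff[OF finite_subsets_of_card, where n = n]) (auto intro: finite_subset)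
  finally show ?thesis by blast
qed

end
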